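(* Let $H\in(\tfrac12,1)$, $\beta\in(1-2H,1]$, $\tau=T/M$, $t_i=i\tau$, and fix $m\in\{1,\dots,M\}$. For $u\in[t_i,t_{i+1})$ set $\mathcal S_N(u,t_i):=E_N(t_m-u)-E_N(t_m-t_i)$. Then there is a constant $C$ independent of $N,M,m$ and $x$ such that for all $x\in V$, $$\sum_{i,j=0}^{m-1}\int_{t_j}^{t_{j+1}}\int_{t_i}^{t_{i+1}}\big\langle\mathcal S_N(u,t_i)P_Nx,\;\mathcal S_N(v,t_j)P_Nx\big\rangle\,\phi(u-v)\,\mathrm du\,\mathrm dv\le C\,\tau^{2H+\beta-1}\|A_N^{\frac{\beta-1}{2}}P_Nx\|^2 .$$
   Context: $(V,\langle\cdot,\cdot\rangle,\|\cdot\|)$ is a real separable Hilbert space; $A$ is a linear, densely defined, positive self-adjoint unbounded operator with compact inverse, orthonormal eigenbasis $(e_i)$, $Ae_i=\lambda_ie_i$, $0<\lambda_1\le\lambda_2\le\dots\to\infty$. $P_N$ is the orthogonal projection onto $\mathrm{span}\{e_1,\dots,e_N\}$, $A_N=AP_N$ (with fractional powers taken on $\mathrm{span}\{e_1,\dots,e_N\}$), $E_N(t)=e^{-tA_N}$. $\phi(y)=H(2H-1)|y|^{2H-2}$. *)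

theory Defs
  imports "HOL-Analysis.Analysis"
begin

text \<open>The eigenbasis is indexed from 0: e 0, e 1, ... with eigenvalues lam 0 \<le> lam 1 \<le> ...
  so span{e_1,...,e_N} of the paper is span{e 0,...,e (N-1)}.\<close>

definition PN :: "(nat \<Rightarrow> 'a::real_inner) \<Rightarrow> nat \<Rightarrow> 'a \<Rightarrow> 'a" where
  "PN e N x = (\<Sum>k<N. inner x (e k) *\<^sub>R e k)"

text \<open>E_N(t) = exp(-t A_N) with A_N = A P_N; it acts as identity on the orthogonal
  complement of span{e_k : k < N}.\<close>
definition EN :: "(nat \<Rightarrow> 'a::real_inner) \<Rightarrow> (nat \<Rightarrow> real) \<Rightarrow> nat \<Rightarrow> real \<Rightarrow> 'a \<Rightarrow> 'a" where
  "EN e lam N t x = x - PN e N x + (\<Sum>k<N. (exp (- t * lam k) * inner x (e k)) *\<^sub>R e k)"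

definition ANpow :: "(nat \<Rightarrow> 'a::real_inner) \<Rightarrow> (nat \<Rightarrow> real) \<Rightarrow> nat \<Rightarrow> real \<Rightarrow> 'a \<Rightarrow> 'a" where
  "ANpow e lam N s x = (\<Sum>k<N. (lam k powr s * inner x (e k)) *\<^sub>R e k)"

definition phi :: "real \<Rightarrow> real \<Rightarrow> real" where
  "phi H y = H * (2 * H - 1) * \<bar>y\<bar> powr (2 * H - 2)"

definition SN :: "(nat \<Rightarrow> 'a::real_inner) \<Rightarrow> (nat \<Rightarrow> real) \<Rightarrow> nat \<Rightarrow> real \<Rightarrow> real \<Rightarrow> real \<Rightarrow> 'a \<Rightarrow> 'a" where
  "SN e lam N tm u s x = EN e lam N (tm - u) x - EN e lam N (tm - s) x"

end

theory Submission
  imports Defs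
begin

text \<open>In the eigenbasis the integrand is \<open>\<Sum>k. \<langle>x, e k\<rangle>\<^sup>2 d\<^sub>k(u) d\<^sub>k(v) \<phi>(u - v)\<close>, where
  the semigroup increment \<open>d\<^sub>k(u) = exp (- (t\<^sub>m - u) \<lambda>\<^sub>k) - exp (- (t\<^sub>m - t\<^sub>i) \<lambda>\<^sub>k)\<close>
  satisfies \<open>0 \<le> d\<^sub>k(u) \<le> min 1 (\<lambda>\<^sub>k \<tau>) exp (- (t\<^sub>m - u) \<lambda>\<^sub>k)\<close>.
  Bounding every cell integral in absolute value, the grid sum is dominated by the integral
  over \<open>[0, t\<^sub>m]\<^sup>2\<close> of \<open>exp (- (t\<^sub>m - u) \<lambda>) exp (- (t\<^sub>m - v) \<lambda>) \<bar>u - v\<bar>\<^bsup>2H-2\<^esup>\<close>,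
  which is \<open>O(\<lambda>\<^bsup>-2H\<^esup>)\<close> uniformly in \<open>t\<^sub>m\<close>. Finally
  \<open>min 1 (\<lambda> \<tau>)\<^sup>2 \<lambda>\<^bsup>-2H\<^esup> \<le> \<tau>\<^bsup>2H+\<beta>-1\<^esup> \<lambda>\<^bsup>\<beta>-1\<^esup>\<close> because \<open>0 < 2H + \<beta> - 1 \<le> 2\<close>.\<close>

section \<open>Integrals of exponentially damped singular kernels\<close>

text \<open>No integrability is assumed: a non-integrable interval integral is \<open>0\<close>.\<close>
lemma abs_interval_integral_le_nn_integral:
  fixes f :: "real \<Rightarrow> real" and a b :: real
  assumes "a \<le> b"
  shows "ennreal \<bar>LBINT x=a..b. f x\<bar> \<le> (\<integral>\<^sup>+x. indicator {a<..<b} x * ennreal \<bar>f x\<bar> \<partial>lborel)"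
proof (cases "integrable lborel (\<lambda>x. indicator {a<..<b} x *\<^sub>R f x)")
  case True
  have "ennreal \<bar>LBINT x=a..b. f x\<bar> \<le> (\<integral>\<^sup>+x. norm (indicator {a<..<b} x *\<^sub>R f x) \<partial>lborel)"
    using integral_norm_bound_ennreal[OF True] assms
    by (simp add: interval_lebesgue_integral_def set_lebesgue_integral_def)
  also have "\<dots> = (\<integral>\<^sup>+x. indicator {a<..<b} x * ennreal \<bar>f x\<bar> \<partial>lborel)"
    by (intro nn_integral_cong) (auto split: split_indicator)
  finally show ?thesis .
next
  case False
  then show ?thesis using assms
    by (simp add: interval_lebesgue_integral_def set_lebesgue_integral_def not_integrable_integral_eq)
qed

lemma has_integral_abs_powr_right:
  fixes v r p :: real
  assumes "0 < r" "-1 < p"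
  shows "((\<lambda>u. \<bar>u - v\<bar> powr p) has_integral (r powr (p + 1) / (p + 1))) {v..v + r}"
proof -
  define F where "F u = (u - v) powr (p + 1) / (p + 1)" for u
  have "((\<lambda>u. (u - v) powr p) has_integral (F (v + r) - F v)) {v..v + r}"
  proof (rule fundamental_theorem_of_calculus_interior)
    show "continuous_on {v..v + r} F"
      unfolding F_def using assms by (intro continuous_intros continuous_on_powr') auto
    show "(F has_vector_derivative (u - v) powr p) (at u)" if "u \<in> {v<..<v + r}" for u
    proof -
      have "(F has_real_derivative ((p + 1) * (u - v) powr (p + 1 - 1) * 1 / (p + 1))) (at u)"
        unfolding F_def using that by (auto intro!: derivative_eq_intros)
      then show ?thesis
        using assms by (simp add: has_real_derivative_iff_has_vector_derivative[symmetric])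
    qed
  qed (use assms in simp)
  moreover have "F (v + r) - F v = r powr (p + 1) / (p + 1)"
    using assms by (simp add: F_def)
  ultimately show ?thesis
    by (subst has_integral_cong[where g = "\<lambda>u. (u - v) powr p"]) auto
qed

lemma has_integral_abs_powr_left:
  fixes v r p :: real
  assumes "0 < r" "-1 < p"
  shows "((\<lambda>u. \<bar>u - v\<bar> powr p) has_integral (r powr (p + 1) / (p + 1))) {v - r..v}"
proof -
  have "\<bar>- u - v\<bar> = \<bar>u - (- v)\<bar>" for u
    by linarith
  then have "((\<lambda>u. \<bar>- u - v\<bar> powr p) has_integral (r powr (p + 1) / (p + 1))) {- v..- (v - r)}"
    using has_integral_abs_powr_right[OF assms, of "- v"] by simp
  then show ?thesis
    using has_integral_reflect_real[where f = "\<lambda>u. \<bar>u - v\<bar> powr p"] by blast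
qed

lemma nn_integral_abs_powr_centered_le:
  fixes v r p :: real
  assumes "0 < r" "-1 < p"
  shows "(\<integral>\<^sup>+u. indicator {v - r..v + r} u * ennreal (\<bar>u - v\<bar> powr p) \<partial>lborel)
    \<le> ennreal (2 * (r powr (p + 1) / (p + 1)))"
proof -
  let ?f = "\<lambda>u. ennreal (\<bar>u - v\<bar> powr p)"
  have "(\<integral>\<^sup>+u. indicator {v - r..v + r} u * ?f u \<partial>lborel)
      \<le> (\<integral>\<^sup>+u. ?f u * indicator {v - r..v} u + ?f u * indicator {v..v + r} u \<partial>lborel)"
    by (intro nn_integral_mono) (auto split: split_indicator)
  also have "\<dots> = (\<integral>\<^sup>+u. ?f u * indicator {v - r..v} u \<partial>lborel)
      + (\<integral>\<^sup>+u. ?f u * indicator {v..v + r} u \<partial>lborel)"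
    by (intro nn_integral_add) auto
  also have "\<dots> = ennreal (r powr (p + 1) / (p + 1)) + ennreal (r powr (p + 1) / (p + 1))"
    using nn_integral_has_integral_lebesgue'[OF _ has_integral_abs_powr_left[OF assms, of v]]
      nn_integral_has_integral_lebesgue'[OF _ has_integral_abs_powr_right[OF assms, of v]]
    by simp
  also have "\<dots> = ennreal (2 * (r powr (p + 1) / (p + 1)))"
    using assms by (simp add: ennreal_plus[symmetric] del: ennreal_plus)
  finally show ?thesis .
qed

lemma nn_integral_exp_decay_le:
  fixes a l :: real
  assumes "0 \<le> a" "0 < l"
  shows "(\<integral>\<^sup>+u. indicator {0..a} u * ennreal (exp (- (a - u) * l)) \<partial>lborel) \<le> ennreal (1 / l)"
proof -
  define F where "F u = exp (- (a - u) * l) / l" for u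
  have "((\<lambda>u. exp (- (a - u) * l)) has_integral (F a - F 0)) {0..a}"
  proof (rule fundamental_theorem_of_calculus)
    show "(F has_vector_derivative exp (- (a - u) * l)) (at u within {0..a})" for u
    proof -
      have "(F has_real_derivative (exp (- (a - u) * l) * l / l)) (at u within {0..a})"
        unfolding F_def by (auto intro!: derivative_eq_intros)
      then show ?thesis
        using assms by (simp add: has_real_derivative_iff_has_vector_derivative[symmetric])
    qed
  qed fact
  from nn_integral_has_integral_lebesgue'[OF _ this]
  have "(\<integral>\<^sup>+u. ennreal (exp (- (a - u) * l)) * indicator {0..a} u \<partial>lborel)
      = ennreal ((1 - exp (- a * l)) / l)"
    by (simp add: F_def diff_divide_distrib)
  moreover have "ennreal ((1 - exp (- a * l)) / l) \<le> ennreal (1 / l)"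
    using assms by (intro ennreal_leI divide_right_mono) auto
  ultimately show ?thesis
    by (simp add: mult.commute)
qed

lemma exp_decay_abs_powr_split_le:
  fixes a l u v p r :: real
  assumes "0 \<le> l" "p \<le> 0" "0 < r"
  shows "indicator {0..a} u * ennreal (exp (- (a - u) * l) * \<bar>u - v\<bar> powr p)
    \<le> indicator {v - r..v + r} u * ennreal (\<bar>u - v\<bar> powr p)
      + ennreal (r powr p) * (indicator {0..a} u * ennreal (exp (- (a - u) * l)))"
proof (cases "u \<in> {0..a}")
  case True
  then have exp_le: "exp (- (a - u) * l) \<le> 1"
    using assms by (simp add: mult_nonpos_nonneg)
  show ?thesis
  proof (cases "\<bar>u - v\<bar> \<le> r")
    case True
    have "ennreal (exp (- (a - u) * l) * \<bar>u - v\<bar> powr p) \<le> ennreal (\<bar>u - v\<bar> powr p)"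
      using exp_le by (intro ennreal_leI) (simp add: mult_left_le_one_le)
    with True \<open>u \<in> {0..a}\<close> show ?thesis
      by (simp add: add_increasing2 indicator_def abs_le_iff)
  next
    case False
    then have "\<bar>u - v\<bar> powr p \<le> r powr p"
      using assms by (intro powr_mono2') auto
    then have "ennreal (exp (- (a - u) * l) * \<bar>u - v\<bar> powr p)
        \<le> ennreal (r powr p) * ennreal (exp (- (a - u) * l))"
      by (simp add: ennreal_mult'[symmetric] ennreal_leI mult.commute mult_left_mono)
    with \<open>u \<in> {0..a}\<close> show ?thesis
      by (simp add: add_increasing)
  qed
qed simp

text \<open>Split at distance \<open>1/l\<close> from the singularity.\<close>
lemma nn_integral_exp_decay_abs_powr_le:
  fixes l a v p :: real
  assumes "0 < l" "0 \<le> a" "-1 < p" "p \<le> 0"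
  shows "(\<integral>\<^sup>+u. indicator {0..a} u * ennreal (exp (- (a - u) * l) * \<bar>u - v\<bar> powr p) \<partial>lborel)
    \<le> ennreal (l powr (- (p + 1)) * (2 / (p + 1) + 1))"
proof -
  define r where "r = 1 / l"
  have r_powr: "r powr q = l powr (- q)" for q
    using assms by (simp add: r_def powr_divide powr_minus_divide)
  have "0 < r"
    using assms by (simp add: r_def)
  have "(\<integral>\<^sup>+u. indicator {0..a} u * ennreal (exp (- (a - u) * l) * \<bar>u - v\<bar> powr p) \<partial>lborel)
      \<le> (\<integral>\<^sup>+u. indicator {v - r..v + r} u * ennreal (\<bar>u - v\<bar> powr p)
        + ennreal (r powr p) * (indicator {0..a} u * ennreal (exp (- (a - u) * l))) \<partial>lborel)"
    using assms \<open>0 < r\<close> by (intro nn_integral_mono exp_decay_abs_powr_split_le) auto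
  also have "\<dots> = (\<integral>\<^sup>+u. indicator {v - r..v + r} u * ennreal (\<bar>u - v\<bar> powr p) \<partial>lborel)
      + ennreal (r powr p) * (\<integral>\<^sup>+u. indicator {0..a} u * ennreal (exp (- (a - u) * l)) \<partial>lborel)"
    by (subst nn_integral_add) (auto simp: nn_integral_cmult)
  also have "\<dots> \<le> ennreal (2 * (r powr (p + 1) / (p + 1))) + ennreal (r powr p) * ennreal (1 / l)"
    using \<open>0 < r\<close> assms
    by (intro add_mono mult_left_mono nn_integral_abs_powr_centered_le nn_integral_exp_decay_le) auto
  also have "\<dots> = ennreal (l powr (- (p + 1)) * (2 / (p + 1) + 1))"
  proof -
    have "l powr (- p) * (1 / l) = l powr (- (p + 1))"
      using assms by (simp add: powr_diff powr_minus_divide powr_add divide_simps)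
    then show ?thesis
      using assms by (simp add: r_powr ennreal_mult'[symmetric] ennreal_plus[symmetric] algebra_simps
        del: ennreal_plus)
  qed
  finally show ?thesis .
qed

lemma nn_integral_square_exp_decay_abs_powr_le:
  fixes l a p :: real
  assumes "0 < l" "0 \<le> a" "-1 < p" "p \<le> 0"
  shows "(\<integral>\<^sup>+v. indicator {0..a} v * (\<integral>\<^sup>+u. indicator {0..a} u
      * ennreal (exp (- (a - u) * l) * exp (- (a - v) * l) * \<bar>u - v\<bar> powr p) \<partial>lborel) \<partial>lborel)
    \<le> ennreal (l powr (- (p + 2)) * (2 / (p + 1) + 1))"
proof -
  define K where "K = l powr (- (p + 1)) * (2 / (p + 1) + 1)"
  have K: "0 \<le> K" using assms by (simp add: K_def)
  have inner: "(\<integral>\<^sup>+u. indicator {0..a} u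
      * ennreal (exp (- (a - u) * l) * exp (- (a - v) * l) * \<bar>u - v\<bar> powr p) \<partial>lborel)
      \<le> ennreal (exp (- (a - v) * l)) * ennreal K" for v
  proof -
    have "(\<integral>\<^sup>+u. indicator {0..a} u
        * ennreal (exp (- (a - u) * l) * exp (- (a - v) * l) * \<bar>u - v\<bar> powr p) \<partial>lborel)
        = ennreal (exp (- (a - v) * l))
          * (\<integral>\<^sup>+u. indicator {0..a} u * ennreal (exp (- (a - u) * l) * \<bar>u - v\<bar> powr p) \<partial>lborel)"
      by (subst nn_integral_cmult[symmetric]) (auto intro!: nn_integral_cong simp: ennreal_mult' mult_ac)
    also have "\<dots> \<le> ennreal (exp (- (a - v) * l)) * ennreal K"
      unfolding K_def by (intro mult_left_mono nn_integral_exp_decay_abs_powr_le assms) auto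
    finally show ?thesis .
  qed
  have "indicator {0..a} v * (\<integral>\<^sup>+u. indicator {0..a} u
      * ennreal (exp (- (a - u) * l) * exp (- (a - v) * l) * \<bar>u - v\<bar> powr p) \<partial>lborel)
      \<le> ennreal K * (indicator {0..a} v * ennreal (exp (- (a - v) * l)))" for v
    using mult_left_mono[OF inner, of "indicator {0..a} v" v] by (simp add: mult_ac)
  then have "(\<integral>\<^sup>+v. indicator {0..a} v * (\<integral>\<^sup>+u. indicator {0..a} u
      * ennreal (exp (- (a - u) * l) * exp (- (a - v) * l) * \<bar>u - v\<bar> powr p) \<partial>lborel) \<partial>lborel)
      \<le> (\<integral>\<^sup>+v. ennreal K * (indicator {0..a} v * ennreal (exp (- (a - v) * l))) \<partial>lborel)"
    by (intro nn_integral_mono)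
  also have "\<dots> = ennreal K * (\<integral>\<^sup>+v. indicator {0..a} v * ennreal (exp (- (a - v) * l)) \<partial>lborel)"
    by (rule nn_integral_cmult) simp
  also have "\<dots> \<le> ennreal K * ennreal (1 / l)"
    by (rule mult_left_mono[OF nn_integral_exp_decay_le[OF assms(2,1)]]) simp
  also have "\<dots> = ennreal (l powr (- (p + 2)) * (2 / (p + 1) + 1))"
  proof -
    have "l powr (- (p + 1)) * (1 / l) = l powr (- (p + 2))"
      using assms by (simp add: powr_diff powr_minus_divide powr_add divide_simps power2_eq_square)
    then have "K * (1 / l) = l powr (- (p + 2)) * (2 / (p + 1) + 1)"
      unfolding K_def by (metis mult.assoc mult.commute)
    then show ?thesis
      using K by (simp add: ennreal_mult'[symmetric])
  qed
  finally show ?thesis .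
qed

lemma nn_integral_square_sum_exp_decay_abs_powr_le:
  fixes l b :: "nat \<Rightarrow> real" and a p :: real
  assumes l: "\<And>k. 0 < l k" and "0 \<le> a" "-1 < p" "p \<le> 0" and b: "\<And>k. 0 \<le> b k"
  shows "(\<integral>\<^sup>+v. indicator {0..a} v * (\<integral>\<^sup>+u. indicator {0..a} u * ennreal (\<Sum>k<N. b k
      * (exp (- (a - u) * l k) * exp (- (a - v) * l k) * \<bar>u - v\<bar> powr p)) \<partial>lborel) \<partial>lborel)
    \<le> ennreal (\<Sum>k<N. b k * (l k powr (- (p + 2)) * (2 / (p + 1) + 1)))"
proof -
  define \<kappa> where "\<kappa> k u v = exp (- (a - u) * l k) * exp (- (a - v) * l k) * \<bar>u - v\<bar> powr p" for k u v
  define I where "I k = (\<integral>\<^sup>+v. indicator {0..a} v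
      * (\<integral>\<^sup>+u. indicator {0..a} u * ennreal (\<kappa> k u v) \<partial>lborel) \<partial>lborel)" for k
  have meas: "(\<lambda>(u, v). \<kappa> k u v) \<in> borel_measurable (lborel \<Otimes>\<^sub>M lborel)" for k
    unfolding \<kappa>_def by measurable
  have sum_ennreal_\<kappa>: "indicator S u * ennreal (\<Sum>k<N. b k * \<kappa> k u v)
      = (\<Sum>k<N. ennreal (b k) * (indicator S u * ennreal (\<kappa> k u v)))" for S u v
    by (subst sum_ennreal[symmetric])
      (auto simp: \<kappa>_def b ennreal_mult' sum_distrib_left mult_ac intro!: mult_nonneg_nonneg)
  have "(\<integral>\<^sup>+v. indicator {0..a} v * (\<integral>\<^sup>+u. indicator {0..a} u
      * ennreal (\<Sum>k<N. b k * \<kappa> k u v) \<partial>lborel) \<partial>lborel) = (\<Sum>k<N. ennreal (b k) * I k)"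
  proof -
    have "(\<integral>\<^sup>+u. indicator {0..a} u * ennreal (\<Sum>k<N. b k * \<kappa> k u v) \<partial>lborel)
        = (\<Sum>k<N. ennreal (b k) * (\<integral>\<^sup>+u. indicator {0..a} u * ennreal (\<kappa> k u v) \<partial>lborel))" for v
      unfolding sum_ennreal_\<kappa> using meas
      by (subst nn_integral_sum) (auto intro!: sum.cong nn_integral_cmult)
    then show ?thesis
      unfolding I_def using meas
      by (simp add: sum_distrib_left mult.left_commute nn_integral_sum nn_integral_cmult)
  qed
  also have "\<dots> \<le> (\<Sum>k<N. ennreal (b k) * ennreal (l k powr (- (p + 2)) * (2 / (p + 1) + 1)))"
    unfolding I_def \<kappa>_def
    by (intro sum_mono mult_left_mono nn_integral_square_exp_decay_abs_powr_le l assms) auto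
  also have "\<dots> = ennreal (\<Sum>k<N. b k * (l k powr (- (p + 2)) * (2 / (p + 1) + 1)))"
    using assms by (subst sum_ennreal[symmetric]) (auto simp: ennreal_mult' b)
  finally show ?thesis
    unfolding \<kappa>_def .
qed

section \<open>Sums over a uniform grid\<close>

lemma sum_indicator_grid_cells_le:
  fixes \<tau> u :: real
  assumes "0 < \<tau>"
  shows "(\<Sum>i<m. indicator {real i * \<tau><..<real (Suc i) * \<tau>} u :: ennreal) \<le> indicator {0..real m * \<tau>} u"
proof -
  let ?cell = "\<lambda>i. {real i * \<tau><..<real (Suc i) * \<tau>}"
  have "?cell i \<inter> ?cell j = {}" if "i < j" for i j
  proof -
    have "real (Suc i) * \<tau> \<le> real j * \<tau>"
      using assms that by (intro mult_right_mono) auto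
    then show ?thesis by auto
  qed
  then have "disjoint_family_on ?cell {..<m}"
    unfolding disjoint_family_on_def by (metis inf_commute nat_neq_iff)
  moreover have "(\<Union>i<m. ?cell i) \<subseteq> {0..real m * \<tau>}"
  proof (intro UN_least subsetI)
    fix i u assume i: "i \<in> {..<m}" and u: "u \<in> ?cell i"
    have "real (Suc i) * \<tau> \<le> real m * \<tau>"
      using assms i by (intro mult_right_mono) auto
    moreover have "0 \<le> real i * \<tau>"
      using assms by simp
    ultimately show "u \<in> {0..real m * \<tau>}"
      using u by (simp only: atLeastAtMost_iff greaterThanLessThan_iff) linarith
  qed
  ultimately show ?thesis
    by (simp only: indicator_UN_disjoint[OF finite_lessThan, symmetric]) (intro indicator_leI, blast)
qed

lemma sum_grid_cells_nn_integral_le: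
  fixes F :: "real \<Rightarrow> real \<Rightarrow> ennreal" and \<tau> :: real
  assumes "0 < \<tau>" and F_meas: "(\<lambda>(u, v). F u v) \<in> borel_measurable (lborel \<Otimes>\<^sub>M lborel)"
  shows "(\<Sum>i<m. \<Sum>j<m. \<integral>\<^sup>+v. indicator {real j * \<tau><..<real (Suc j) * \<tau>} v
      * (\<integral>\<^sup>+u. indicator {real i * \<tau><..<real (Suc i) * \<tau>} u * F u v \<partial>lborel) \<partial>lborel)
    \<le> (\<integral>\<^sup>+v. indicator {0..real m * \<tau>} v
      * (\<integral>\<^sup>+u. indicator {0..real m * \<tau>} u * F u v \<partial>lborel) \<partial>lborel)"
proof -
  define J where "J i = {real i * \<tau><..<real (Suc i) * \<tau>}" for i
  define \<Phi> where "\<Phi> i v = (\<integral>\<^sup>+u. indicator (J i) u * F u v \<partial>lborel)" for i v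
  have meas: "(\<lambda>v. indicator (J j) v * \<Phi> i v) \<in> borel_measurable lborel" for i j
    unfolding \<Phi>_def J_def using F_meas by measurable
  have "(\<Sum>i<m. \<Sum>j<m. \<integral>\<^sup>+v. indicator (J j) v * \<Phi> i v \<partial>lborel)
      = (\<Sum>i<m. \<integral>\<^sup>+v. (\<Sum>j<m. indicator (J j) v * \<Phi> i v) \<partial>lborel)"
    by (intro sum.cong refl nn_integral_sum[symmetric] meas)
  also have "\<dots> = (\<integral>\<^sup>+v. (\<Sum>i<m. \<Sum>j<m. indicator (J j) v * \<Phi> i v) \<partial>lborel)"
    by (intro nn_integral_sum[symmetric] borel_measurable_sum meas)
  also have "\<dots> = (\<integral>\<^sup>+v. (\<Sum>j<m. indicator (J j) v) * (\<Sum>i<m. \<Phi> i v) \<partial>lborel)"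
    unfolding sum_product by (intro nn_integral_cong) (rule sum.swap)
  also have "\<dots> \<le> (\<integral>\<^sup>+v. indicator {0..real m * \<tau>} v
      * (\<integral>\<^sup>+u. indicator {0..real m * \<tau>} u * F u v \<partial>lborel) \<partial>lborel)"
  proof (intro nn_integral_mono mult_mono)
    fix v
    have "(\<Sum>i<m. \<Phi> i v) = (\<integral>\<^sup>+u. (\<Sum>i<m. indicator (J i) u) * F u v \<partial>lborel)"
      unfolding \<Phi>_def sum_distrib_right J_def using measurable_Pair1[OF F_meas, of v]
      by (intro nn_integral_sum[symmetric]) auto
    also have "\<dots> \<le> (\<integral>\<^sup>+u. indicator {0..real m * \<tau>} u * F u v \<partial>lborel)"
      unfolding J_def by (intro nn_integral_mono mult_right_mono sum_indicator_grid_cells_le assms) auto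
    finally show "(\<Sum>i<m. \<Phi> i v) \<le> (\<integral>\<^sup>+u. indicator {0..real m * \<tau>} u * F u v \<partial>lborel)" .
  qed (use sum_indicator_grid_cells_le[OF assms(1)] in \<open>auto simp: J_def simp del: of_nat_Suc\<close>)
  finally show ?thesis
    unfolding \<Phi>_def J_def .
qed

lemma abs_iterated_interval_integral_le_nn_integral:
  fixes f :: "real \<Rightarrow> real \<Rightarrow> real" and a b c d :: real
  assumes "a \<le> b" "c \<le> d"
  shows "ennreal \<bar>LBINT v=c..d. (LBINT u=a..b. f u v)\<bar>
    \<le> (\<integral>\<^sup>+v. indicator {c<..<d} v * (\<integral>\<^sup>+u. indicator {a<..<b} u * ennreal \<bar>f u v\<bar> \<partial>lborel) \<partial>lborel)"
  using abs_interval_integral_le_nn_integral[OF assms(2)]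
  by (rule order_trans)
    (intro nn_integral_mono mult_left_mono abs_interval_integral_le_nn_integral[OF assms(1)]; simp)

lemma sum_abs_grid_double_integrals_le:
  fixes g :: "nat \<Rightarrow> nat \<Rightarrow> real \<Rightarrow> real \<Rightarrow> real" and G :: "real \<Rightarrow> real \<Rightarrow> real" and \<tau> :: real
  assumes "0 < \<tau>"
    and G_meas: "(\<lambda>(u, v). G u v) \<in> borel_measurable (lborel \<Otimes>\<^sub>M lborel)"
    and g_le: "\<And>i j u v. u \<in> {real i * \<tau><..<real (Suc i) * \<tau>} \<Longrightarrow>
      v \<in> {real j * \<tau><..<real (Suc j) * \<tau>} \<Longrightarrow> \<bar>g i j u v\<bar> \<le> G u v"
  shows "ennreal (\<Sum>i<m. \<Sum>j<m. \<bar>LBINT v=real j * \<tau>..real (Suc j) * \<tau>.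
      (LBINT u=real i * \<tau>..real (Suc i) * \<tau>. g i j u v)\<bar>)
    \<le> (\<integral>\<^sup>+v. indicator {0..real m * \<tau>} v
      * (\<integral>\<^sup>+u. indicator {0..real m * \<tau>} u * ennreal (G u v) \<partial>lborel) \<partial>lborel)"
proof -
  have cell_le: "real i * \<tau> \<le> real (Suc i) * \<tau>" for i
    using assms by (intro mult_right_mono) auto
  have "ennreal (\<Sum>i<m. \<Sum>j<m. \<bar>LBINT v=real j * \<tau>..real (Suc j) * \<tau>.
      (LBINT u=real i * \<tau>..real (Suc i) * \<tau>. g i j u v)\<bar>)
      = (\<Sum>i<m. \<Sum>j<m. ennreal \<bar>LBINT v=real j * \<tau>..real (Suc j) * \<tau>.
        (LBINT u=real i * \<tau>..real (Suc i) * \<tau>. g i j u v)\<bar>)"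
    by (simp add: sum_nonneg del: of_nat_Suc)
  also have "\<dots> \<le> (\<Sum>i<m. \<Sum>j<m. \<integral>\<^sup>+v. indicator {real j * \<tau><..<real (Suc j) * \<tau>} v
      * (\<integral>\<^sup>+u. indicator {real i * \<tau><..<real (Suc i) * \<tau>} u * ennreal (G u v) \<partial>lborel) \<partial>lborel)"
  proof (intro sum_mono order_trans[OF abs_iterated_interval_integral_le_nn_integral[OF cell_le cell_le]])
    fix i j
    have "indicator {real i * \<tau><..<real (Suc i) * \<tau>} u * ennreal \<bar>g i j u v\<bar>
        \<le> indicator {real i * \<tau><..<real (Suc i) * \<tau>} u * ennreal (G u v)"
      if "v \<in> {real j * \<tau><..<real (Suc j) * \<tau>}" for u v
      using g_le[OF _ that, of u i] by (auto split: split_indicator intro: ennreal_leI simp del: of_nat_Suc)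
    then show "(\<integral>\<^sup>+v. indicator {real j * \<tau><..<real (Suc j) * \<tau>} v
        * (\<integral>\<^sup>+u. indicator {real i * \<tau><..<real (Suc i) * \<tau>} u * ennreal \<bar>g i j u v\<bar> \<partial>lborel) \<partial>lborel)
      \<le> (\<integral>\<^sup>+v. indicator {real j * \<tau><..<real (Suc j) * \<tau>} v
        * (\<integral>\<^sup>+u. indicator {real i * \<tau><..<real (Suc i) * \<tau>} u * ennreal (G u v) \<partial>lborel) \<partial>lborel)"
      by (intro nn_integral_mono) (auto split: split_indicator intro: nn_integral_mono simp del: of_nat_Suc)
  qed
  also have "\<dots> \<le> (\<integral>\<^sup>+v. indicator {0..real m * \<tau>} v
      * (\<integral>\<^sup>+u. indicator {0..real m * \<tau>} u * ennreal (G u v) \<partial>lborel) \<partial>lborel)"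
    using measurable_compose[OF G_meas measurable_ennreal]
    by (intro sum_grid_cells_nn_integral_le assms) (simp add: case_prod_beta)
  finally show ?thesis .
qed

section \<open>Spectral expansions\<close>

lemma inner_sum_orthonormal:
  fixes e :: "nat \<Rightarrow> 'a::real_inner"
  assumes orth: "\<forall>i j. inner (e i) (e j) = (if i = j then 1 else 0)"
  shows "inner (\<Sum>k<N. a k *\<^sub>R e k) (\<Sum>k<N. b k *\<^sub>R e k) = (\<Sum>k<N. a k * b k)"
  by (simp add: inner_sum_left inner_sum_right orth if_distrib sum.delta mult.commute cong: if_cong)

lemma inner_PN_basis:
  fixes e :: "nat \<Rightarrow> 'a::real_inner"
  assumes orth: "\<forall>i j. inner (e i) (e j) = (if i = j then 1 else 0)" and "k < N"
  shows "inner (PN e N x) (e k) = inner x (e k)"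
  using assms(2) by (simp add: PN_def inner_sum_left orth if_distrib sum.delta' cong: if_cong)

lemma PN_idem:
  fixes e :: "nat \<Rightarrow> 'a::real_inner"
  assumes orth: "\<forall>i j. inner (e i) (e j) = (if i = j then 1 else 0)"
  shows "PN e N (PN e N x) = PN e N x"
  by (simp add: PN_def[of e N "PN e N x"] inner_PN_basis[OF orth]) (simp add: PN_def)

lemma SN_PN_expansion:
  fixes e :: "nat \<Rightarrow> 'a::real_inner"
  assumes orth: "\<forall>i j. inner (e i) (e j) = (if i = j then 1 else 0)"
  shows "SN e lam N a u s (PN e N x)
    = (\<Sum>k<N. ((exp (- (a - u) * lam k) - exp (- (a - s) * lam k)) * inner x (e k)) *\<^sub>R e k)"
proof -
  have "EN e lam N t (PN e N x) = (\<Sum>k<N. (exp (- t * lam k) * inner x (e k)) *\<^sub>R e k)" for t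
    by (simp add: EN_def PN_idem[OF orth] inner_PN_basis[OF orth])
  then show ?thesis
    by (simp add: SN_def sum_subtractf[symmetric] algebra_simps scaleR_diff_left)
qed

lemma norm_ANpow_PN:
  fixes e :: "nat \<Rightarrow> 'a::real_inner"
  assumes orth: "\<forall>i j. inner (e i) (e j) = (if i = j then 1 else 0)"
  shows "(norm (ANpow e lam N s (PN e N x)))\<^sup>2 = (\<Sum>k<N. (lam k powr s)\<^sup>2 * (inner x (e k))\<^sup>2)"
proof -
  have "ANpow e lam N s (PN e N x) = (\<Sum>k<N. (lam k powr s * inner x (e k)) *\<^sub>R e k)"
    by (simp add: ANpow_def inner_PN_basis[OF orth])
  then show ?thesis
    unfolding power2_norm_eq_inner by (simp add: inner_sum_orthonormal[OF orth] power2_eq_square algebra_simps)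
qed

text \<open>Both bounds come from \<open>1 - exp (- y) \<le> min 1 y\<close> for \<open>y \<ge> 0\<close>.\<close>
lemma exp_increment_bounds:
  fixes l a s u \<tau> :: real
  assumes "0 \<le> l" "s \<le> u" "u \<le> s + \<tau>"
  shows "0 \<le> exp (- (a - u) * l) - exp (- (a - s) * l)"
    and "exp (- (a - u) * l) - exp (- (a - s) * l) \<le> min 1 (l * \<tau>) * exp (- (a - u) * l)"
proof -
  define q where "q = exp (- (u - s) * l)"
  have "exp (- (a - s) * l) = exp (- (a - u) * l) * q"
    unfolding q_def by (simp add: exp_add[symmetric] algebra_simps)
  then have incr: "exp (- (a - u) * l) - exp (- (a - s) * l) = (1 - q) * exp (- (a - u) * l)"
    by (simp add: algebra_simps)
  have "q \<le> 1"
    using assms by (simp add: q_def mult_nonpos_nonneg)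
  moreover have "1 - q \<le> l * \<tau>"
  proof -
    have "1 + - (u - s) * l \<le> q"
      unfolding q_def by (rule exp_ge_add_one_self)
    moreover have "(u - s) * l \<le> \<tau> * l"
      using assms by (intro mult_right_mono) auto
    ultimately show ?thesis by (simp add: algebra_simps)
  qed
  moreover have "0 < q"
    by (simp add: q_def)
  ultimately show "0 \<le> exp (- (a - u) * l) - exp (- (a - s) * l)"
    and "exp (- (a - u) * l) - exp (- (a - s) * l) \<le> min 1 (l * \<tau>) * exp (- (a - u) * l)"
    unfolding incr by (auto intro!: mult_right_mono)
qed

lemma abs_inner_SN_PN_le:
  fixes e :: "nat \<Rightarrow> 'a::real_inner"
  assumes orth: "\<forall>i j. inner (e i) (e j) = (if i = j then 1 else 0)"
    and lam: "\<And>k. 0 \<le> lam k" and u: "s \<le> u" "u \<le> s + \<tau>" and v: "s' \<le> v" "v \<le> s' + \<tau>"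
  shows "\<bar>inner (SN e lam N a u s (PN e N x)) (SN e lam N a v s' (PN e N x))\<bar>
    \<le> (\<Sum>k<N. (min 1 (lam k * \<tau>))\<^sup>2 * (inner x (e k))\<^sup>2
      * (exp (- (a - u) * lam k) * exp (- (a - v) * lam k)))"
proof -
  define d where "d k t r = exp (- (a - t) * lam k) - exp (- (a - r) * lam k)" for k t r
  have "\<bar>d k u s * d k v s' * (inner x (e k))\<^sup>2\<bar>
      \<le> (min 1 (lam k * \<tau>))\<^sup>2 * (inner x (e k))\<^sup>2 * (exp (- (a - u) * lam k) * exp (- (a - v) * lam k))"
    for k
  proof -
    note du = exp_increment_bounds[OF lam u, of a] and dv = exp_increment_bounds[OF lam v, of a]
    have "\<bar>d k u s * d k v s' * (inner x (e k))\<^sup>2\<bar> = d k u s * d k v s' * (inner x (e k))\<^sup>2"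
      using du(1) dv(1) by (simp add: d_def abs_mult)
    also have "\<dots> \<le> (min 1 (lam k * \<tau>) * exp (- (a - u) * lam k))
        * (min 1 (lam k * \<tau>) * exp (- (a - v) * lam k)) * (inner x (e k))\<^sup>2"
      unfolding d_def using du dv order.trans[OF du(1) du(2)] by (intro mult_right_mono mult_mono) auto
    finally show ?thesis
      by (simp add: power2_eq_square mult_ac)
  qed
  then have "\<bar>\<Sum>k<N. d k u s * d k v s' * (inner x (e k))\<^sup>2\<bar>
      \<le> (\<Sum>k<N. (min 1 (lam k * \<tau>))\<^sup>2 * (inner x (e k))\<^sup>2
        * (exp (- (a - u) * lam k) * exp (- (a - v) * lam k)))"
    by (intro order.trans[OF sum_abs] sum_mono)
  then show ?thesis
    by (simp add: SN_PN_expansion[OF orth] inner_sum_orthonormal[OF orth] d_def power2_eq_square mult_ac)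
qed

lemma min_one_square_mult_powr_le:
  fixes l \<tau> \<alpha> \<gamma> :: real
  assumes "0 < l" "0 < \<tau>" "0 < \<alpha>" "\<alpha> \<le> 2"
  shows "(min 1 (l * \<tau>))\<^sup>2 * l powr (\<gamma> - \<alpha>) \<le> \<tau> powr \<alpha> * l powr \<gamma>"
proof -
  have s: "0 < l * \<tau>"
    using assms by simp
  have "(min 1 (l * \<tau>))\<^sup>2 \<le> (l * \<tau>) powr \<alpha>"
  proof (cases "l * \<tau> \<le> 1")
    case True
    then have "(min 1 (l * \<tau>))\<^sup>2 = (l * \<tau>) powr 2"
      using s by (simp add: powr_numeral)
    also have "\<dots> \<le> (l * \<tau>) powr \<alpha>"
      using True s assms by (intro powr_mono') auto
    finally show ?thesis .
  qed (use assms in \<open>simp add: ge_one_powr_ge_zero\<close>)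
  moreover have "(l * \<tau>) powr \<alpha> * l powr (\<gamma> - \<alpha>) = \<tau> powr \<alpha> * l powr \<gamma>"
    using assms by (simp add: powr_mult powr_diff field_simps)
  ultimately show ?thesis
    by (metis mult_right_mono powr_ge_zero)
qed

lemma abs_inner_SN_PN_mult_phi_le:
  fixes e :: "nat \<Rightarrow> 'a::real_inner"
  assumes orth: "\<forall>i j. inner (e i) (e j) = (if i = j then 1 else 0)"
    and lam: "\<And>k. 0 \<le> lam k" and H: "1/2 \<le> H"
    and u: "s \<le> u" "u \<le> s + \<tau>" and v: "s' \<le> v" "v \<le> s' + \<tau>"
  shows "\<bar>inner (SN e lam N a u s (PN e N x)) (SN e lam N a v s' (PN e N x)) * phi H (u - v)\<bar>
    \<le> (\<Sum>k<N. H * (2 * H - 1) * (min 1 (lam k * \<tau>))\<^sup>2 * (inner x (e k))\<^sup>2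
      * (exp (- (a - u) * lam k) * exp (- (a - v) * lam k) * \<bar>u - v\<bar> powr (2 * H - 2)))"
proof -
  have phi_abs: "\<bar>phi H (u - v)\<bar> = H * (2 * H - 1) * \<bar>u - v\<bar> powr (2 * H - 2)"
    using H by (simp add: phi_def abs_mult)
  have "\<bar>inner (SN e lam N a u s (PN e N x)) (SN e lam N a v s' (PN e N x)) * phi H (u - v)\<bar>
      \<le> (\<Sum>k<N. (min 1 (lam k * \<tau>))\<^sup>2 * (inner x (e k))\<^sup>2
        * (exp (- (a - u) * lam k) * exp (- (a - v) * lam k)))
        * (H * (2 * H - 1) * \<bar>u - v\<bar> powr (2 * H - 2))"
    unfolding abs_mult phi_abs using H
    by (intro mult_right_mono abs_inner_SN_PN_le[OF orth lam u v]) auto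
  also have "\<dots> = (\<Sum>k<N. H * (2 * H - 1) * (min 1 (lam k * \<tau>))\<^sup>2 * (inner x (e k))\<^sup>2
      * (exp (- (a - u) * lam k) * exp (- (a - v) * lam k) * \<bar>u - v\<bar> powr (2 * H - 2)))"
    unfolding sum_distrib_right by (rule sum.cong) (simp_all add: mult_ac)
  finally show ?thesis .
qed

lemma sum_min_one_square_weights_le_norm_ANpow:
  fixes e :: "nat \<Rightarrow> 'a::real_inner"
  assumes orth: "\<forall>i j. inner (e i) (e j) = (if i = j then 1 else 0)"
    and lam_pos: "\<And>k. 0 < lam k" and "0 < \<tau>" "0 < \<alpha>" "\<alpha> \<le> 2"
  shows "(\<Sum>k<N. (min 1 (lam k * \<tau>))\<^sup>2 * (inner x (e k))\<^sup>2 * lam k powr (\<gamma> - \<alpha>))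
    \<le> \<tau> powr \<alpha> * (norm (ANpow e lam N (\<gamma> / 2) (PN e N x)))\<^sup>2"
proof -
  have "(\<Sum>k<N. (min 1 (lam k * \<tau>))\<^sup>2 * (inner x (e k))\<^sup>2 * lam k powr (\<gamma> - \<alpha>))
      \<le> (\<Sum>k<N. \<tau> powr \<alpha> * lam k powr \<gamma> * (inner x (e k))\<^sup>2)"
  proof (intro sum_mono)
    fix k
    have "(min 1 (lam k * \<tau>))\<^sup>2 * lam k powr (\<gamma> - \<alpha>) * (inner x (e k))\<^sup>2
        \<le> \<tau> powr \<alpha> * lam k powr \<gamma> * (inner x (e k))\<^sup>2"
      by (intro mult_right_mono min_one_square_mult_powr_le[OF lam_pos assms(3-5)]) simp
    then show "(min 1 (lam k * \<tau>))\<^sup>2 * (inner x (e k))\<^sup>2 * lam k powr (\<gamma> - \<alpha>)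
        \<le> \<tau> powr \<alpha> * lam k powr \<gamma> * (inner x (e k))\<^sup>2"
      by (simp only: mult_ac)
  qed
  also have "\<dots> = \<tau> powr \<alpha> * (norm (ANpow e lam N (\<gamma> / 2) (PN e N x)))\<^sup>2"
  proof -
    have "(lam k powr (\<gamma> / 2))\<^sup>2 = lam k powr \<gamma>" for k
      by (simp add: power2_eq_square flip: powr_add)
    then show ?thesis
      by (simp add: norm_ANpow_PN[OF orth] sum_distrib_left mult_ac)
  qed
  finally show ?thesis .
qed

lemma sum_grid_double_integrals_SN_PN_le:
  fixes e :: "nat \<Rightarrow> 'a::real_inner" and lam :: "nat \<Rightarrow> real" and H \<beta> \<tau> :: real
  assumes orth: "\<forall>i j. inner (e i) (e j) = (if i = j then 1 else 0)"
    and lam_pos: "\<And>k. 0 < lam k"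
    and H: "1/2 < H" "H < 1"
    and beta: "1 - 2 * H < \<beta>" "\<beta> \<le> 1"
    and \<tau>: "0 < \<tau>"
  shows "(\<Sum>i<m. \<Sum>j<m. LBINT v=real j * \<tau>..real (Suc j) * \<tau>.
      (LBINT u=real i * \<tau>..real (Suc i) * \<tau>.
        inner (SN e lam N (real m * \<tau>) u (real i * \<tau>) (PN e N x))
          (SN e lam N (real m * \<tau>) v (real j * \<tau>) (PN e N x)) * phi H (u - v)))
    \<le> H * (2 * H - 1) * (2 / (2 * H - 1) + 1) * \<tau> powr (2 * H + \<beta> - 1)
      * (norm (ANpow e lam N ((\<beta> - 1) / 2) (PN e N x)))\<^sup>2"
proof -
  define K where "K = 2 / (2 * H - 1) + 1"
  define b where "b k = H * (2 * H - 1) * (min 1 (lam k * \<tau>))\<^sup>2 * (inner x (e k))\<^sup>2" for k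
  define G where "G u v = (\<Sum>k<N. b k * (exp (- (real m * \<tau> - u) * lam k)
    * exp (- (real m * \<tau> - v) * lam k) * \<bar>u - v\<bar> powr (2 * H - 2)))" for u v
  define g where "g i j u v = inner (SN e lam N (real m * \<tau>) u (real i * \<tau>) (PN e N x))
    (SN e lam N (real m * \<tau>) v (real j * \<tau>) (PN e N x)) * phi H (u - v)" for i j u v
  define R where "R = (\<Sum>k<N. b k * (lam k powr (- 2 * H) * K))"
  have b: "0 \<le> b k" for k
    using H by (simp add: b_def)
  have g_le: "\<bar>g i j u v\<bar> \<le> G u v"
    if "u \<in> {real i * \<tau><..<real (Suc i) * \<tau>}" "v \<in> {real j * \<tau><..<real (Suc j) * \<tau>}" for i j u v
    unfolding g_def G_def b_def using that lam_pos H
    by (intro abs_inner_SN_PN_mult_phi_le[OF orth]) (auto simp: less_imp_le algebra_simps)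
  have "ennreal (\<Sum>i<m. \<Sum>j<m. \<bar>LBINT v=real j * \<tau>..real (Suc j) * \<tau>.
      (LBINT u=real i * \<tau>..real (Suc i) * \<tau>. g i j u v)\<bar>) \<le> ennreal R"
  proof (rule order_trans[OF sum_abs_grid_double_integrals_le[OF \<tau> _ g_le]])
    show "(\<lambda>(u, v). G u v) \<in> borel_measurable (lborel \<Otimes>\<^sub>M lborel)"
      unfolding G_def by measurable
    have "- (2 * H - 2 + 2) = - 2 * H" "2 / (2 * H - 2 + 1) + 1 = K"
      by (simp_all add: K_def)
    then show "(\<integral>\<^sup>+v. indicator {0..real m * \<tau>} v
        * (\<integral>\<^sup>+u. indicator {0..real m * \<tau>} u * ennreal (G u v) \<partial>lborel) \<partial>lborel) \<le> ennreal R"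
      unfolding G_def R_def
      using nn_integral_square_sum_exp_decay_abs_powr_le[of lam "real m * \<tau>" "2 * H - 2" b N]
        lam_pos \<tau> H b by simp
  qed
  moreover have "0 \<le> R"
    using b H by (simp add: R_def K_def sum_nonneg)
  ultimately have "(\<Sum>i<m. \<Sum>j<m. \<bar>LBINT v=real j * \<tau>..real (Suc j) * \<tau>.
      (LBINT u=real i * \<tau>..real (Suc i) * \<tau>. g i j u v)\<bar>) \<le> R"
    by (simp del: of_nat_Suc)
  then have "(\<Sum>i<m. \<Sum>j<m. LBINT v=real j * \<tau>..real (Suc j) * \<tau>.
      (LBINT u=real i * \<tau>..real (Suc i) * \<tau>. g i j u v)) \<le> R"
    by (rule order_trans[rotated]) (intro sum_mono abs_ge_self)
  also have "R = H * (2 * H - 1) * K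
      * (\<Sum>k<N. (min 1 (lam k * \<tau>))\<^sup>2 * (inner x (e k))\<^sup>2 * lam k powr ((\<beta> - 1) - (2 * H + \<beta> - 1)))"
  proof -
    have "(\<beta> - 1) - (2 * H + \<beta> - 1) = - 2 * H"
      by simp
    then show ?thesis
      unfolding R_def b_def sum_distrib_left by (intro sum.cong) (simp_all only: mult_ac)
  qed
  also have "\<dots> \<le> H * (2 * H - 1) * K * (\<tau> powr (2 * H + \<beta> - 1)
      * (norm (ANpow e lam N ((\<beta> - 1) / 2) (PN e N x)))\<^sup>2)"
    using H beta by (intro mult_left_mono sum_min_one_square_weights_le_norm_ANpow[OF orth lam_pos \<tau>])
      (auto simp: K_def)
  finally show ?thesis
    unfolding g_def K_def by (simp only: mult.assoc)
qed

theorem mainTheorem10: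
  fixes e :: "nat \<Rightarrow> 'a::{real_inner,complete_space}" and lam :: "nat \<Rightarrow> real"
    and H \<beta> T :: real
  assumes orth: "\<forall>i j. inner (e i) (e j) = (if i = j then 1 else 0)"
    and complete: "closure (span (range e)) = UNIV"
    and lam_pos: "\<forall>i. 0 < lam i"
    and lam_mono: "mono lam"
    and lam_inf: "filterlim lam at_top sequentially"
    and H: "1/2 < H" "H < 1"
    and beta: "1 - 2 * H < \<beta>" "\<beta> \<le> 1"
    and T: "0 < T"
  shows "\<exists>C. \<forall>N M m x. 0 < M \<longrightarrow> 1 \<le> m \<longrightarrow> m \<le> M \<longrightarrow>
     (let \<tau> = T / real M; t = (\<lambda>i::nat. real i * \<tau>) in
       (\<Sum>i<m. \<Sum>j<m.
          (LBINT v=t j..t (Suc j). (LBINT u=t i..t (Suc i).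
            inner (SN e lam N (t m) u (t i) (PN e N x)) (SN e lam N (t m) v (t j) (PN e N x))
              * phi H (u - v))))
       \<le> C * \<tau> powr (2 * H + \<beta> - 1) * (norm (ANpow e lam N ((\<beta> - 1) / 2) (PN e N x)))\<^sup>2)"
  unfolding Let_def
proof (intro exI[of _ "H * (2 * H - 1) * (2 / (2 * H - 1) + 1)"] allI impI
    sum_grid_double_integrals_SN_PN_le[OF orth _ H beta])
  show "0 < lam k" for k
    using lam_pos by simp
  show "0 < T / real M" if "0 < M" for M :: nat
    using T that by simp
qed

end
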